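(* Let $\mathcal{A}$ be a locally constant algebraic conformal net, and let $A$ be the associative $\mathbf{K}$-algebra that $\mathcal{A}$ assigns to every positively-oriented interval. Then $A$ is commutative.
   Context: Fix a field $\mathbf{K}$. $\mathsf{Algebra}$ denotes the category of associative unital $\mathbf{K}$-algebras and algebra homomorphisms. Orient $\mathbf{R}$ from the negative to the positive reals. An interval is an oriented compact connected one-dimensional submanifold of $\mathbf{R}$, which is either positively-oriented (orientation induced from $\mathbf{R}$) or negatively-oriented (opposite orientation); $\overline{I}$ denotes $I$ with reversed orientation, and $J$ is a subinterval of $I$ if $J\subset I$. $\mathsf{INT}$ is the category whose objects are intervals and whose morphisms are orientation-preserving embeddings. An algebraic conformal net is a functor $\mathcal{A}\colon \mathsf{INT}\to\mathsf{Algebra}$ with $\mathcal{A}(\overline{I})=\mathcal{A}(I)^{\mathrm{op}}$ for every interval $I$, such that, for all subintervals $I,J$ of an interval $K$ with inclusions $i\colon I\hookrightarrow K$, $j\colon J\hookrightarrow K$: (1) (isotony) $\mathcal{A}(f)$ is injective for every embedding $f$; (2) (locality) if $I$ and $J$ have disjoint interiors, then $\mathcal{A}(i)(\mathcal{A}(I))$ and $\mathcal{A}(j)(\mathcal{A}(J))$ are mutually commuting subalgebras of $\mathcal{A}(K)$; (3) (strong additivity) if $K=I\cup J$, then $\mathcal{A}(K)$ is generated as an algebra by $\mathcal{A}(i)(\mathcal{A}(I))$ and $\mathcal{A}(j)(\mathcal{A}(J))$. An algebraic conformal net $\mathcal{A}$ is locally constant if it maps every positively-oriented interval to one and the same algebra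 $A$ and every embedding between positively-oriented intervals to the identity of $A$. *)

theory Defs
  imports Complex_Main
begin

record ('k, 'a) kalg =
  carrier :: "'a set"
  zero :: 'a
  one :: 'a
  add :: "'a \<Rightarrow> 'a \<Rightarrow> 'a"
  mult :: "'a \<Rightarrow> 'a \<Rightarrow> 'a"
  smult :: "'k \<Rightarrow> 'a \<Rightarrow> 'a"

definition is_algebra :: "('k::field, 'a) kalg \<Rightarrow> bool" where
  "is_algebra A \<longleftrightarrow>
     zero A \<in> carrier A \<and> one A \<in> carrier A \<and>
     (\<forall>x\<in>carrier A. \<forall>y\<in>carrier A. add A x y \<in> carrier A \<and> mult A x y \<in> carrier A) \<and>
     (\<forall>c. \<forall>x\<in>carrier A. smult A c x \<in> carrier A) \<and>
     (\<forall>x\<in>carrier A. \<forall>y\<in>carrier A. \<forall>z\<in>carrier A.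
        add A (add A x y) z = add A x (add A y z) \<and>
        mult A (mult A x y) z = mult A x (mult A y z) \<and>
        mult A x (add A y z) = add A (mult A x y) (mult A x z) \<and>
        mult A (add A x y) z = add A (mult A x z) (mult A y z)) \<and>
     (\<forall>x\<in>carrier A. \<forall>y\<in>carrier A. add A x y = add A y x) \<and>
     (\<forall>x\<in>carrier A. add A (zero A) x = x \<and> mult A (one A) x = x \<and> mult A x (one A) = x) \<and>
     (\<forall>x\<in>carrier A. \<exists>y\<in>carrier A. add A x y = zero A) \<and>
     (\<forall>c d. \<forall>x\<in>carrier A. \<forall>y\<in>carrier A.
        smult A c (add A x y) = add A (smult A c x) (smult A c y) \<and>
        smult A (c + d) x = add A (smult A c x) (smult A d x) \<and>
        smult A (c * d) x = smult A c (smult A d x) \<and>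
        mult A (smult A c x) y = smult A c (mult A x y) \<and>
        mult A x (smult A c y) = smult A c (mult A x y)) \<and>
     (\<forall>x\<in>carrier A. smult A 1 x = x)"

definition op_alg :: "('k, 'a) kalg \<Rightarrow> ('k, 'a) kalg" where
  "op_alg A = A\<lparr>mult := (\<lambda>x y. mult A y x)\<rparr>"

definition alg_hom :: "('k, 'a) kalg \<Rightarrow> ('k, 'a) kalg \<Rightarrow> ('a \<Rightarrow> 'a) \<Rightarrow> bool" where
  "alg_hom A B h \<longleftrightarrow>
     (\<forall>x\<in>carrier A. h x \<in> carrier B) \<and>
     h (one A) = one B \<and>
     (\<forall>x\<in>carrier A. \<forall>y\<in>carrier A.
        h (add A x y) = add B (h x) (h y) \<and> h (mult A x y) = mult B (h x) (h y)) \<and>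
     (\<forall>c. \<forall>x\<in>carrier A. h (smult A c x) = smult B c (h x))"

definition subalg_gen :: "('k::field, 'a) kalg \<Rightarrow> 'a set \<Rightarrow> 'a set" where
  "subalg_gen A S = \<Inter>{B. S \<subseteq> B \<and> B \<subseteq> carrier A \<and> one A \<in> B \<and>
      (\<forall>x\<in>B. \<forall>y\<in>B. add A x y \<in> B \<and> mult A x y \<in> B) \<and>
      (\<forall>c. \<forall>x\<in>B. smult A c x \<in> B)}"

text \<open>An oriented interval is encoded as (a, b, p) with a < b, meaning the set [a,b],
  positively oriented iff p.\<close>
type_synonym intv = "real \<times> real \<times> bool"

definition lo :: "intv \<Rightarrow> real" where "lo I = fst I"
definition hi :: "intv \<Rightarrow> real" where "hi I = fst (snd I)"
definition pos :: "intv \<Rightarrow> bool" where "pos I = snd (snd I)"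

definition is_intv :: "intv \<Rightarrow> bool" where "is_intv I \<longleftrightarrow> lo I < hi I"
definition iset :: "intv \<Rightarrow> real set" where "iset I = {lo I .. hi I}"
definition interior_intv :: "intv \<Rightarrow> real set" where "interior_intv I = {lo I <..< hi I}"
definition rev_intv :: "intv \<Rightarrow> intv" where "rev_intv I = (lo I, hi I, \<not> pos I)"

text \<open>J is a subinterval of I (with the induced orientation, so that the inclusion is a
  morphism of INT).\<close>
definition subint :: "intv \<Rightarrow> intv \<Rightarrow> bool" where
  "subint J I \<longleftrightarrow> is_intv J \<and> is_intv I \<and> iset J \<subseteq> iset I \<and> pos J = pos I"

definition smooth_on :: "real set \<Rightarrow> (real \<Rightarrow> real) \<Rightarrow> bool" where
  "smooth_on S f \<longleftrightarrow> (\<exists>U D. open U \<and> S \<subseteq> U \<and> (\<forall>x\<in>U. D 0 x = f x) \<and>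
      (\<forall>n. \<forall>x\<in>U. (D n has_real_derivative D (Suc n) x) (at x)))"

definition is_emb :: "intv \<Rightarrow> intv \<Rightarrow> (real \<Rightarrow> real) \<Rightarrow> bool" where
  "is_emb I J f \<longleftrightarrow> is_intv I \<and> is_intv J \<and>
     f ` iset I \<subseteq> iset J \<and> inj_on f (iset I) \<and> smooth_on (iset I) f \<and>
     (\<forall>x\<in>iset I. \<exists>d. (f has_real_derivative d) (at x) \<and> d \<noteq> 0 \<and>
                     (0 < d \<longleftrightarrow> (pos I \<longleftrightarrow> pos J)))"

text \<open>A functor INT \<rightarrow> Algebra is given by its object part Aobj and its morphism part
  Amor I J f (the image of the embedding f : I \<rightarrow> J); morphisms agreeing on I are equal.\<close>
definition is_functor_INT :: "(intv \<Rightarrow> ('k::field, 'a) kalg) \<Rightarrow> (intv \<Rightarrow> intv \<Rightarrow> (real \<Rightarrow> real) \<Rightarrow> 'a \<Rightarrow> 'a) \<Rightarrow> bool" where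
  "is_functor_INT Aobj Amor \<longleftrightarrow>
     (\<forall>I. is_intv I \<longrightarrow> is_algebra (Aobj I)) \<and>
     (\<forall>I J f. is_emb I J f \<longrightarrow> alg_hom (Aobj I) (Aobj J) (Amor I J f)) \<and>
     (\<forall>I J f g. is_emb I J f \<and> (\<forall>t\<in>iset I. f t = g t) \<longrightarrow>
        (\<forall>x\<in>carrier (Aobj I). Amor I J f x = Amor I J g x)) \<and>
     (\<forall>I. is_intv I \<longrightarrow> (\<forall>x\<in>carrier (Aobj I). Amor I I id x = x)) \<and>
     (\<forall>I J K f g. is_emb I J f \<and> is_emb J K g \<longrightarrow>
        (\<forall>x\<in>carrier (Aobj I). Amor I K (g \<circ> f) x = Amor J K g (Amor I J f x)))"

definition is_alg_conformal_net :: "(intv \<Rightarrow> ('k::field, 'a) kalg) \<Rightarrow> (intv \<Rightarrow> intv \<Rightarrow> (real \<Rightarrow> real) \<Rightarrow> 'a \<Rightarrow> 'a) \<Rightarrow> bool" where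
  "is_alg_conformal_net Aobj Amor \<longleftrightarrow>
     is_functor_INT Aobj Amor \<and>
     (\<forall>I. is_intv I \<longrightarrow> Aobj (rev_intv I) = op_alg (Aobj I)) \<and>
     \<comment> \<open>isotony\<close>
     (\<forall>I J f. is_emb I J f \<longrightarrow> inj_on (Amor I J f) (carrier (Aobj I))) \<and>
     \<comment> \<open>locality\<close>
     (\<forall>I J K. subint I K \<and> subint J K \<and> interior_intv I \<inter> interior_intv J = {} \<longrightarrow>
        (\<forall>x\<in>carrier (Aobj I). \<forall>y\<in>carrier (Aobj J).
           mult (Aobj K) (Amor I K id x) (Amor J K id y) =
           mult (Aobj K) (Amor J K id y) (Amor I K id x))) \<and>
     \<comment> \<open>strong additivity\<close>
     (\<forall>I J K. subint I K \<and> subint J K \<and> iset K = iset I \<union> iset J \<longrightarrow>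
        carrier (Aobj K) = subalg_gen (Aobj K)
           (Amor I K id ` carrier (Aobj I) \<union> Amor J K id ` carrier (Aobj J)))"

definition locally_constant_net :: "(intv \<Rightarrow> ('k::field, 'a) kalg) \<Rightarrow> (intv \<Rightarrow> intv \<Rightarrow> (real \<Rightarrow> real) \<Rightarrow> 'a \<Rightarrow> 'a) \<Rightarrow> ('k, 'a) kalg \<Rightarrow> bool" where
  "locally_constant_net Aobj Amor A \<longleftrightarrow>
     (\<forall>I. is_intv I \<and> pos I \<longrightarrow> Aobj I = A) \<and>
     (\<forall>I J f. is_emb I J f \<and> pos I \<and> pos J \<longrightarrow> (\<forall>x\<in>carrier A. Amor I J f x = x))"

end

theory Submission
  imports Defs
begin

(* Place two positively oriented intervals I = [0,1] and J = [1,2] inside K = [0,2]. Their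
   interiors are disjoint, so by locality the images of A(I) and A(J) commute in A(K). For a
   locally constant net all three algebras are A and both inclusions are the identity, so
   any two elements of A commute. *)

lemma smooth_on_id: "smooth_on S id"
proof -
  define D :: "nat \<Rightarrow> real \<Rightarrow> real" where
    "D = (\<lambda>n x. if n = 0 then x else if n = 1 then 1 else 0)"
  have "(D n has_real_derivative D (Suc n) x) (at x)" for n x
    by (cases "n = 0") (auto simp: D_def intro: derivative_eq_intros)
  moreover have "D 0 x = id x" for x
    by (simp add: D_def)
  ultimately show ?thesis
    unfolding smooth_on_def by (intro exI[of _ UNIV] exI[of _ D]) auto
qed

lemma is_emb_id_subint:
  assumes "subint I K"
  shows "is_emb I K id"
proof -
  have "(id has_real_derivative 1) (at x)" for x :: real
    unfolding id_def by (rule DERIV_ident)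
  then show ?thesis
    using assms smooth_on_id unfolding is_emb_def subint_def
    by (auto intro!: exI[of _ "1::real"])
qed

lemma alg_conformal_net_locality:
  assumes "is_alg_conformal_net Aobj Amor"
    and "subint I K" "subint J K" "interior_intv I \<inter> interior_intv J = {}"
    and "x \<in> carrier (Aobj I)" "y \<in> carrier (Aobj J)"
  shows "mult (Aobj K) (Amor I K id x) (Amor J K id y) =
         mult (Aobj K) (Amor J K id y) (Amor I K id x)"
  using assms unfolding is_alg_conformal_net_def by blast

lemma locally_constant_net_inclusion:
  assumes "locally_constant_net Aobj Amor A" "subint I K" "pos I" "x \<in> carrier A"
  shows "Amor I K id x = x"
  using assms is_emb_id_subint unfolding locally_constant_net_def subint_def by blast

lemma locally_constant_net_obj:
  assumes "locally_constant_net Aobj Amor A" "is_intv I" "pos I"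
  shows "Aobj I = A"
  using assms unfolding locally_constant_net_def by blast

theorem mainTheorem1:
  fixes Aobj :: "intv \<Rightarrow> ('k::field, 'a) kalg"
    and Amor :: "intv \<Rightarrow> intv \<Rightarrow> (real \<Rightarrow> real) \<Rightarrow> 'a \<Rightarrow> 'a"
    and A :: "('k, 'a) kalg"
  assumes "is_alg_conformal_net Aobj Amor"
    and "locally_constant_net Aobj Amor A"
  shows "\<forall>x\<in>carrier A. \<forall>y\<in>carrier A. mult A x y = mult A y x"
proof (intro ballI)
  fix x y assume x: "x \<in> carrier A" and y: "y \<in> carrier A"
  define I :: intv where "I = (0, 1, True)"
  define J :: intv where "J = (1, 2, True)"
  define K :: intv where "K = (0, 2, True)"
  have I: "subint I K" "pos I" and J: "subint J K" "pos J" and K: "is_intv K" "pos K"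
    by (auto simp: subint_def is_intv_def iset_def lo_def hi_def pos_def I_def J_def K_def)
  have disjoint: "interior_intv I \<inter> interior_intv J = {}"
    by (auto simp: interior_intv_def lo_def hi_def I_def J_def)
  have "Aobj I = A" "Aobj J = A" "Aobj K = A"
    using I J K assms(2) locally_constant_net_obj subint_def by metis+
  moreover have "Amor I K id x = x" "Amor J K id y = y"
    using I J x y assms(2) locally_constant_net_inclusion by metis+
  ultimately show "mult A x y = mult A y x"
    using alg_conformal_net_locality[OF assms(1) I(1) J(1) disjoint] x y by metis
qed

end
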